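(* Let $n\ge 1$ and let $\rho_1$ be a density matrix on $n$ qubits (Hilbert space $H_1\cong(\mathbb{C}^2)^{\otimes n}$) at time $t_1$. Let $\mathcal{M}_{2|1}$ be a completely positive trace-preserving (CPTP) map from operators on $H_1$ to operators on $H_2\cong(\mathbb{C}^2)^{\otimes n}$, applied between times $t_1$ and $t_2$, with Choi–Jamiołkowski matrix $$M_{12}:=\sum_{i,j=0}^{2^n-1}\big(|i\rangle\langle j|\big)^T\otimes \mathcal{M}_{2|1}\big(|i\rangle\langle j|\big)\in\mathcal{B}(H_1\otimes H_2).$$ Let $R_{12}$ be the two-time $n$-qubit pseudo-density matrix obtained with coarse-grained measurements at $t_1$ and $t_2$ (as defined in the context). Then $$R_{12}=\tfrac12\big(M_{12}\,\rho+\rho\,M_{12}\big),\qquad \rho:=\rho_1\otimes \mathbb{1}_2 .$$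
   Context: Pauli matrices: $\sigma_0=\mathbb{1},\sigma_1,\sigma_2,\sigma_3$; an $n$-qubit Pauli matrix is an element $\tilde\sigma\in\{\sigma_0,\sigma_1,\sigma_2,\sigma_3\}^{\otimes n}$, indexed by $i\in\{0,\dots,4^n-1\}$. Coarse-grained measurement of $\tilde\sigma_{i}$ at time $t_\alpha$: the two-outcome projective measurement $\{P^\alpha_+=(\mathbb{1}+\tilde\sigma_{i})/2,\ P^\alpha_-=(\mathbb{1}-\tilde\sigma_{i})/2\}$ with outcomes $+1,-1$ respectively, and post-measurement (Lüders) update $\rho\mapsto P^\alpha_\pm\rho P^\alpha_\pm$ (unnormalized, its trace being the outcome probability). For a pair $(i_1,i_2)$, the experiment is: prepare $\rho_1$, perform the coarse-grained measurement of $\tilde\sigma_{i_1}$ at $t_1$, apply $\mathcal{M}_{2|1}$ to the post-measurement state, perform the coarse-grained measurement of $\tilde\sigma_{i_2}$ at $t_2$; $\langle\tilde\sigma_{i_1},\tilde\sigma_{i_2}\rangle$ denotes the expectation value of the product of the two $\pm1$ outcomes. The pseudo-density matrix is $$R_{12}=\frac{1}{2^{2n}}\sum_{i_1,i_2=0}^{4^n-1}\langle\tilde\sigma_{i_1},\tilde\sigma_{i_2}\rangle\,\tilde\sigma_{i_1}\otimes\tilde\sigma_{i_2}.$$ *)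

theory Defs
  imports Complex_Main "Jordan_Normal_Form.Matrix"
begin

(* Operators on n qubits are complex (2^n x 2^n) matrices (Jordan_Normal_Form). *)

definition mtrace :: "complex mat \<Rightarrow> complex" where
  "mtrace A = (\<Sum>i<dim_row A. A $$ (i,i))"

(* Kronecker (tensor) product; the first factor is the outer (most significant) index. *)
definition kron :: "complex mat \<Rightarrow> complex mat \<Rightarrow> complex mat" where
  "kron A B = mat (dim_row A * dim_row B) (dim_col A * dim_col B)
     (\<lambda>(i,j). A $$ (i div dim_row B, j div dim_col B) * B $$ (i mod dim_row B, j mod dim_col B))"

definition msum :: "nat \<Rightarrow> ('b \<Rightarrow> complex mat) \<Rightarrow> 'b set \<Rightarrow> complex mat" where
  "msum d f S = mat d d (\<lambda>(r,c). \<Sum>x\<in>S. f x $$ (r,c))"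

definition ket_bra :: "nat \<Rightarrow> nat \<Rightarrow> nat \<Rightarrow> complex mat" where
  "ket_bra d i j = mat d d (\<lambda>(r,c). if r = i \<and> c = j then 1 else 0)"

definition pauli :: "nat \<Rightarrow> complex mat" where
  "pauli k = (if k = 0 then mat_of_rows_list 2 [[1,0],[0,1]]
    else if k = 1 then mat_of_rows_list 2 [[0,1],[1,0]]
    else if k = 2 then mat_of_rows_list 2 [[0,-\<i>],[\<i>,0]]
    else mat_of_rows_list 2 [[1,0],[0,-1]])"

(* n-qubit Pauli matrix with index i in {0..4^n-1} (base-4 digits of i select the factors) *)
fun pauli_n :: "nat \<Rightarrow> nat \<Rightarrow> complex mat" where
  "pauli_n 0 i = 1\<^sub>m 1"
| "pauli_n (Suc n) i = kron (pauli (i mod 4)) (pauli_n n (i div 4))"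

definition psd :: "nat \<Rightarrow> complex mat \<Rightarrow> bool" where
  "psd d A \<longleftrightarrow> A \<in> carrier_mat d d \<and>
     (\<forall>v :: nat \<Rightarrow> complex. let q = (\<Sum>i<d. \<Sum>j<d. cnj (v i) * A $$ (i,j) * v j)
        in q \<in> \<real> \<and> Re q \<ge> 0)"

definition density_matrix :: "nat \<Rightarrow> complex mat \<Rightarrow> bool" where
  "density_matrix d \<rho> \<longleftrightarrow> psd d \<rho> \<and> mtrace \<rho> = 1"

(* (id_k \<otimes> \<Phi>) applied to a (k*d) x (k*d) matrix, blockwise *)
definition ext_map :: "nat \<Rightarrow> nat \<Rightarrow> (complex mat \<Rightarrow> complex mat) \<Rightarrow> complex mat \<Rightarrow> complex mat" where
  "ext_map k d \<Phi> X = mat (k*d) (k*d) (\<lambda>(r,c).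
      \<Phi> (mat d d (\<lambda>(p,q). X $$ ((r div d) * d + p, (c div d) * d + q))) $$ (r mod d, c mod d))"

definition linear_map_on :: "nat \<Rightarrow> (complex mat \<Rightarrow> complex mat) \<Rightarrow> bool" where
  "linear_map_on d \<Phi> \<longleftrightarrow>
     (\<forall>A \<in> carrier_mat d d. \<Phi> A \<in> carrier_mat d d) \<and>
     (\<forall>A \<in> carrier_mat d d. \<forall>B \<in> carrier_mat d d. \<Phi> (A + B) = \<Phi> A + \<Phi> B) \<and>
     (\<forall>A \<in> carrier_mat d d. \<forall>c. \<Phi> (c \<cdot>\<^sub>m A) = c \<cdot>\<^sub>m \<Phi> A)"

definition CPTP :: "nat \<Rightarrow> (complex mat \<Rightarrow> complex mat) \<Rightarrow> bool" where
  "CPTP d \<Phi> \<longleftrightarrow> linear_map_on d \<Phi> \<and>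
     (\<forall>A \<in> carrier_mat d d. mtrace (\<Phi> A) = mtrace A) \<and>
     (\<forall>k X. psd (k*d) X \<longrightarrow> psd (k*d) (ext_map k d \<Phi> X))"

definition choi :: "nat \<Rightarrow> (complex mat \<Rightarrow> complex mat) \<Rightarrow> complex mat" where
  "choi d \<Phi> = msum (d*d) (\<lambda>(i,j). kron (transpose_mat (ket_bra d i j)) (\<Phi> (ket_bra d i j)))
                 ({..<d} \<times> {..<d})"

(* coarse-grained projectors P_{+/-} = (1 +/- sigma)/2, outcome a \<in> {1,-1} *)
definition proj :: "nat \<Rightarrow> nat \<Rightarrow> int \<Rightarrow> complex mat" where
  "proj n i a = (1/2 :: complex) \<cdot>\<^sub>m (1\<^sub>m (2^n) + of_int a \<cdot>\<^sub>m pauli_n n i)"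

(* joint probability of outcomes a, b (Lueders rule, then channel, then second measurement) *)
definition joint_prob :: "nat \<Rightarrow> complex mat \<Rightarrow> (complex mat \<Rightarrow> complex mat) \<Rightarrow> nat \<Rightarrow> nat \<Rightarrow> int \<Rightarrow> int \<Rightarrow> complex" where
  "joint_prob n \<rho> \<Phi> i1 i2 a b =
     mtrace (proj n i2 b * \<Phi> (proj n i1 a * \<rho> * proj n i1 a) * proj n i2 b)"

definition corr :: "nat \<Rightarrow> complex mat \<Rightarrow> (complex mat \<Rightarrow> complex mat) \<Rightarrow> nat \<Rightarrow> nat \<Rightarrow> complex" where
  "corr n \<rho> \<Phi> i1 i2 = (\<Sum>a\<in>{1,-1::int}. \<Sum>b\<in>{1,-1::int}. of_int (a*b) * joint_prob n \<rho> \<Phi> i1 i2 a b)"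

definition pdm :: "nat \<Rightarrow> complex mat \<Rightarrow> (complex mat \<Rightarrow> complex mat) \<Rightarrow> complex mat" where
  "pdm n \<rho> \<Phi> = (1 / 2^(2*n) :: complex) \<cdot>\<^sub>m
     msum (2^n * 2^n) (\<lambda>(i1,i2). corr n \<rho> \<Phi> i1 i2 \<cdot>\<^sub>m kron (pauli_n n i1) (pauli_n n i2))
       ({..<4^n} \<times> {..<4^n})"

end

theory Submission
  imports Defs
begin

(*
  Measuring the coarse-grained observable s sandwiches a state X between the projectors
  P+ = (1 + s)/2 and P- = (1 - s)/2, and the odd part P+ X P+ - P- X P- is the
  anticommutator (s X + X s)/2. Applied at both times this gives
    <s_i1, s_i2> = tr (s_i2 Phi ((s_i1 rho + rho s_i1)/2)).
  The 4^n Pauli matrices are an orthogonal basis: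
    sum_i s_i(r,c) s_i(p,q) = 2^n [p = c and q = r].
  Hence the sum over i2 in R_12 reconstructs Phi ((s_i1 rho + rho s_i1)/2), and, by linearity
  of Phi, the sum over i1 replaces s_i1(r1,c1) s_i1 by 2^n |c1><r1|. So the (r1 r2, c1 c2)
  entry of R_12 is Phi (|c1><r1| rho + rho |c1><r1|)(r2,c2) / 2, and expanding
  rho |c1><r1| and |c1><r1| rho in matrix units shows that the two terms are the corresponding
  entries of M_12 (rho (x) 1) and (rho (x) 1) M_12.
*)

section \<open>Block indices, Kronecker products and finite sums of matrices\<close>

lemma sum_lessThan_mult:
  fixes f :: "nat \<Rightarrow> 'a::comm_monoid_add"
  shows "(\<Sum>i<m*d. f i) = (\<Sum>q<m. \<Sum>r<d. f (q*d + r))"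
proof -
  have "(\<Sum>i<m*d. f i) = (\<Sum>q<m. \<Sum>i\<in>{q*d..<q*d+d}. f i)"
    by (rule sum.nat_group[symmetric])
  also have "\<dots> = (\<Sum>q<m. \<Sum>r<d. f (q*d + r))"
    by (simp add: sum.shift_bounds_nat_ivl[of f 0 "q*d" d for q, simplified] atLeast0LessThan add.commute)
  finally show ?thesis .
qed

lemma block_index_less:
  fixes i p d :: nat
  assumes "i < m" "p < d"
  shows "i * d + p < m * d"
proof -
  have "i * d + p < Suc i * d" using assms by simp
  also have "\<dots> \<le> m * d" using assms by (intro mult_le_mono1) simp
  finally show ?thesis .
qed

lemma mat_eq_blockI:
  fixes A B :: "'a mat"
  assumes "A \<in> carrier_mat (d*d) (d*d)" "B \<in> carrier_mat (d*d) (d*d)"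
    and "\<And>i j p q. i < d \<Longrightarrow> j < d \<Longrightarrow> p < d \<Longrightarrow> q < d \<Longrightarrow>
      A $$ (i*d + p, j*d + q) = B $$ (i*d + p, j*d + q)"
  shows "A = B"
proof (rule eq_matI)
  fix R C assume "R < dim_row B" "C < dim_col B"
  then have R: "R < d*d" and C: "C < d*d" using assms(2) by auto
  then have "d > 0" by (cases d) auto
  moreover have "R div d < d" "C div d < d" using R C by (simp_all add: less_mult_imp_div_less)
  ultimately have "A $$ ((R div d)*d + R mod d, (C div d)*d + C mod d)
      = B $$ ((R div d)*d + R mod d, (C div d)*d + C mod d)"
    by (intro assms(3)) simp_all
  then show "A $$ (R, C) = B $$ (R, C)" by simp
qed (use assms in auto)

lemma kron_carrier:
  "A \<in> carrier_mat a b \<Longrightarrow> B \<in> carrier_mat c d \<Longrightarrow> kron A B \<in> carrier_mat (a*c) (b*d)"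
  by (simp add: kron_def)

lemma dim_row_kron [simp]: "dim_row (kron A B) = dim_row A * dim_row B"
  and dim_col_kron [simp]: "dim_col (kron A B) = dim_col A * dim_col B"
  by (simp_all add: kron_def)

lemma index_kron:
  "A \<in> carrier_mat a b \<Longrightarrow> B \<in> carrier_mat c d \<Longrightarrow> x < a*c \<Longrightarrow> y < b*d \<Longrightarrow>
   kron A B $$ (x, y) = A $$ (x div c, y div d) * B $$ (x mod c, y mod d)"
  by (simp add: kron_def)

lemma index_kron_block:
  assumes "A \<in> carrier_mat a a" "B \<in> carrier_mat c c" "i < a" "j < a" "p < c" "q < c"
  shows "kron A B $$ (i*c + p, j*c + q) = A $$ (i, j) * B $$ (p, q)"
  using assms by (simp add: index_kron block_index_less)

lemma msum_carrier [simp]: "msum d f S \<in> carrier_mat d d"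
  and dim_row_msum [simp]: "dim_row (msum d f S) = d"
  and dim_col_msum [simp]: "dim_col (msum d f S) = d"
  by (simp_all add: msum_def)

lemma index_msum: "r < d \<Longrightarrow> c < d \<Longrightarrow> msum d f S $$ (r, c) = (\<Sum>s\<in>S. f s $$ (r, c))"
  by (simp add: msum_def)

lemma msum_empty: "msum d f {} = 0\<^sub>m d d"
  by (auto simp: msum_def)

lemma msum_insert:
  assumes "finite S" "s \<notin> S" "f s \<in> carrier_mat d d"
  shows "msum d f (insert s S) = f s + msum d f S"
  using assms by (intro eq_matI) (auto simp: index_msum)

lemma ket_bra_carrier [simp]: "ket_bra d i j \<in> carrier_mat d d"
  and dim_row_ket_bra [simp]: "dim_row (ket_bra d i j) = d"
  and dim_col_ket_bra [simp]: "dim_col (ket_bra d i j) = d"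
  by (simp_all add: ket_bra_def)

lemma index_ket_bra_mult:
  assumes "M \<in> carrier_mat d d" "x < d" "y < d" "i < d"
  shows "(ket_bra d j i * M) $$ (x, y) = (if x = j then M $$ (i, y) else 0)"
  using assms by (simp add: ket_bra_def scalar_prod_def atLeast0LessThan if_distrib[of "\<lambda>x. x * _"]
      if_if_eq_conj[symmetric] cong: if_cong)

lemma index_mult_ket_bra:
  assumes "M \<in> carrier_mat d d" "x < d" "y < d" "j < d"
  shows "(M * ket_bra d j i) $$ (x, y) = (if y = i then M $$ (x, j) else 0)"
  using assms by (simp add: ket_bra_def scalar_prod_def atLeast0LessThan if_distrib[of "\<lambda>x. _ * x"]
      if_if_eq_conj[symmetric] cong: if_cong)

lemma mult_ket_bra_eq_msum:
  assumes "M \<in> carrier_mat d d" "j < d" "i < d"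
  shows "M * ket_bra d j i = msum d (\<lambda>k. M $$ (k, j) \<cdot>\<^sub>m ket_bra d k i) {..<d}"
proof (rule eq_matI)
  fix x y assume "x < dim_row (msum d (\<lambda>k. M $$ (k, j) \<cdot>\<^sub>m ket_bra d k i) {..<d})"
    "y < dim_col (msum d (\<lambda>k. M $$ (k, j) \<cdot>\<^sub>m ket_bra d k i) {..<d})"
  then show "(M * ket_bra d j i) $$ (x, y) = msum d (\<lambda>k. M $$ (k, j) \<cdot>\<^sub>m ket_bra d k i) {..<d} $$ (x, y)"
    using assms
    by (cases "y = i") (auto simp: index_msum ket_bra_def scalar_prod_def atLeast0LessThan
        if_distrib[of "\<lambda>x. x * _"] if_distrib[of "\<lambda>x. _ * x"] cong: if_cong)
qed (use assms in auto)

lemma ket_bra_mult_eq_msum: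
  assumes "M \<in> carrier_mat d d" "j < d" "i < d"
  shows "ket_bra d j i * M = msum d (\<lambda>k. M $$ (i, k) \<cdot>\<^sub>m ket_bra d j k) {..<d}"
proof (rule eq_matI)
  fix x y assume "x < dim_row (msum d (\<lambda>k. M $$ (i, k) \<cdot>\<^sub>m ket_bra d j k) {..<d})"
    "y < dim_col (msum d (\<lambda>k. M $$ (i, k) \<cdot>\<^sub>m ket_bra d j k) {..<d})"
  then show "(ket_bra d j i * M) $$ (x, y) = msum d (\<lambda>k. M $$ (i, k) \<cdot>\<^sub>m ket_bra d j k) {..<d} $$ (x, y)"
    using assms
    by (cases "x = j") (auto simp: index_msum ket_bra_def scalar_prod_def atLeast0LessThan
        if_distrib[of "\<lambda>x. x * _"] if_distrib[of "\<lambda>x. _ * x"] cong: if_cong)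
qed (use assms in auto)


lemma mtrace_carrier: "A \<in> carrier_mat d d \<Longrightarrow> mtrace A = (\<Sum>i<d. A $$ (i, i))"
  by (simp add: mtrace_def)

lemma mtrace_add:
  "A \<in> carrier_mat d d \<Longrightarrow> B \<in> carrier_mat d d \<Longrightarrow> mtrace (A + B) = mtrace A + mtrace B"
  by (simp add: mtrace_carrier[of _ d] sum.distrib)

lemma mtrace_minus:
  "A \<in> carrier_mat d d \<Longrightarrow> B \<in> carrier_mat d d \<Longrightarrow> mtrace (A - B) = mtrace A - mtrace B"
  by (auto simp: mtrace_carrier[of _ d] minus_carrier_mat sum_subtractf[symmetric] intro!: sum.cong)

lemma mtrace_smult: "A \<in> carrier_mat d d \<Longrightarrow> mtrace (c \<cdot>\<^sub>m A) = c * mtrace A"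
  by (simp add: mtrace_carrier[of _ d] sum_distrib_left)

lemma mtrace_mult: "A \<in> carrier_mat d d \<Longrightarrow> B \<in> carrier_mat d d \<Longrightarrow>
    mtrace (A * B) = (\<Sum>i<d. \<Sum>k<d. A $$ (i, k) * B $$ (k, i))"
  by (simp add: mtrace_carrier[of _ d] scalar_prod_def atLeast0LessThan)

lemma mtrace_mult_comm:
  "A \<in> carrier_mat d d \<Longrightarrow> B \<in> carrier_mat d d \<Longrightarrow> mtrace (A * B) = mtrace (B * A)"
  by (simp only: mtrace_mult[of A d B] mtrace_mult[of B d A]) (subst sum.swap, simp add: mult.commute)


lemma linear_map_onD:
  assumes "linear_map_on d \<Phi>" "A \<in> carrier_mat d d"
  shows linear_map_on_carrier: "\<Phi> A \<in> carrier_mat d d"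
    and linear_map_on_add: "B \<in> carrier_mat d d \<Longrightarrow> \<Phi> (A + B) = \<Phi> A + \<Phi> B"
    and linear_map_on_smult: "\<Phi> (c \<cdot>\<^sub>m A) = c \<cdot>\<^sub>m \<Phi> A"
  using assms by (auto simp: linear_map_on_def)

lemma linear_map_on_zero:
  assumes "linear_map_on d \<Phi>"
  shows "\<Phi> (0\<^sub>m d d) = 0\<^sub>m d d"
proof -
  have "\<Phi> (0\<^sub>m d d) = \<Phi> (0 \<cdot>\<^sub>m 0\<^sub>m d d)" by simp
  also have "\<dots> = 0 \<cdot>\<^sub>m \<Phi> (0\<^sub>m d d)" using linear_map_on_smult[OF assms zero_carrier_mat] .
  also have "\<dots> = 0\<^sub>m d d" using linear_map_on_carrier[OF assms zero_carrier_mat] by auto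
  finally show ?thesis .
qed

lemma linear_map_on_minus:
  assumes lin: "linear_map_on d \<Phi>" and A: "A \<in> carrier_mat d d" and B: "B \<in> carrier_mat d d"
  shows "\<Phi> (A - B) = \<Phi> A - \<Phi> B"
proof -
  have "\<Phi> A = \<Phi> (B + (A - B))" using A B by (intro arg_cong[of _ _ \<Phi>] eq_matI) auto
  also have "\<dots> = \<Phi> B + \<Phi> (A - B)" by (rule linear_map_on_add[OF lin B minus_carrier_mat[OF B]])
  moreover have "\<Phi> A \<in> carrier_mat d d" "\<Phi> B \<in> carrier_mat d d" "\<Phi> (A - B) \<in> carrier_mat d d"
    using A B by (simp_all add: linear_map_on_carrier[OF lin] minus_carrier_mat)
  ultimately show ?thesis by (intro eq_matI) auto
qed

lemma linear_map_on_msum: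
  assumes lin: "linear_map_on d \<Phi>" and "finite S" and "\<And>s. s \<in> S \<Longrightarrow> f s \<in> carrier_mat d d"
  shows "\<Phi> (msum d f S) = msum d (\<lambda>s. \<Phi> (f s)) S"
  using assms(2,3)
proof (induction S rule: finite_induct)
  case empty
  then show ?case by (simp add: msum_empty linear_map_on_zero[OF lin])
next
  case (insert s S)
  then show ?case
    by (simp add: msum_insert linear_map_on_add[OF lin] linear_map_on_carrier[OF lin])
qed

lemma index_linear_map_on_msum:
  assumes lin: "linear_map_on d \<Phi>" and "finite S" and B: "\<And>s. s \<in> S \<Longrightarrow> B s \<in> carrier_mat d d"
    and "p < d" "q < d"
  shows "\<Phi> (msum d (\<lambda>s. c s \<cdot>\<^sub>m B s) S) $$ (p, q) = (\<Sum>s\<in>S. c s * \<Phi> (B s) $$ (p, q))"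
proof -
  have "\<Phi> (msum d (\<lambda>s. c s \<cdot>\<^sub>m B s) S) $$ (p, q)
      = (\<Sum>s\<in>S. \<Phi> (c s \<cdot>\<^sub>m B s) $$ (p, q))"
    using assms by (simp add: linear_map_on_msum index_msum)
  also have "\<dots> = (\<Sum>s\<in>S. c s * \<Phi> (B s) $$ (p, q))"
  proof (rule sum.cong[OF refl])
    fix s assume s: "s \<in> S"
    show "\<Phi> (c s \<cdot>\<^sub>m B s) $$ (p, q) = c s * \<Phi> (B s) $$ (p, q)"
      using linear_map_on_carrier[OF lin B[OF s]] assms by (simp add: linear_map_on_smult[OF lin B[OF s]])
  qed
  finally show ?thesis .
qed


section \<open>Coarse-grained measurements\<close>

lemma sandwich_expand:
  fixes A X :: "'a::comm_ring_1 mat"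
  assumes A: "A \<in> carrier_mat d d" and X: "X \<in> carrier_mat d d"
  shows "(1\<^sub>m d + c \<cdot>\<^sub>m A) * X * (1\<^sub>m d + c \<cdot>\<^sub>m A)
       = X + c \<cdot>\<^sub>m (A * X + X * A) + (c * c) \<cdot>\<^sub>m (A * X * A)"
proof -
  define Q where "Q = 1\<^sub>m d + c \<cdot>\<^sub>m A"
  have cA: "c \<cdot>\<^sub>m A \<in> carrier_mat d d" using A by simp
  have Q: "Q \<in> carrier_mat d d" using A by (simp add: Q_def)
  have AX: "A * X \<in> carrier_mat d d" using A X by simp
  have left: "Q * Y = Y + c \<cdot>\<^sub>m (A * Y)" if "Y \<in> carrier_mat d d" for Y
    using A that by (simp add: Q_def add_mult_distrib_mat[OF one_carrier_mat cA that] mult_smult_assoc_mat)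
  have right: "Y * Q = Y + c \<cdot>\<^sub>m (Y * A)" if "Y \<in> carrier_mat d d" for Y
    using A that by (simp add: Q_def mult_add_distrib_mat[OF that one_carrier_mat cA] mult_smult_distrib)
  have "Q * X * Q = X * Q + c \<cdot>\<^sub>m (A * X * Q)"
    by (simp add: left[OF X] add_mult_distrib_mat[OF X _ Q] mult_smult_assoc_mat[OF AX Q] AX)
  also have "\<dots> = X + c \<cdot>\<^sub>m (X * A) + c \<cdot>\<^sub>m (A * X + c \<cdot>\<^sub>m (A * X * A))"
    by (simp only: right[OF X] right[OF AX])
  also have "\<dots> = X + c \<cdot>\<^sub>m (A * X + X * A) + (c * c) \<cdot>\<^sub>m (A * X * A)"
    using A X by (intro eq_matI) (simp_all add: algebra_simps del: index_mult_mat(1))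
  finally show ?thesis unfolding Q_def .
qed

lemma lueders_odd_part:
  fixes A X :: "'a::field_char_0 mat"
  assumes A: "A \<in> carrier_mat d d" and X: "X \<in> carrier_mat d d"
  defines "P c \<equiv> (1/2) \<cdot>\<^sub>m (1\<^sub>m d + c \<cdot>\<^sub>m A)"
  shows "P 1 * X * P 1 - P (-1) * X * P (-1) = (1/2) \<cdot>\<^sub>m (A * X + X * A)"
proof -
  have "P c * X * P c = (1/4) \<cdot>\<^sub>m (X + c \<cdot>\<^sub>m (A * X + X * A) + (c * c) \<cdot>\<^sub>m (A * X * A))" for c
  proof -
    define Q where "Q = 1\<^sub>m d + c \<cdot>\<^sub>m A"
    have Q: "Q \<in> carrier_mat d d" using A by (simp add: Q_def)
    have "(1/2) \<cdot>\<^sub>m Q * X = (1/2) \<cdot>\<^sub>m (Q * X)" by (rule mult_smult_assoc_mat[OF Q X])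
    moreover have "(1/2) \<cdot>\<^sub>m (Q * X) * ((1/2) \<cdot>\<^sub>m Q) = (1/2) \<cdot>\<^sub>m (Q * X * ((1/2) \<cdot>\<^sub>m Q))"
      by (rule mult_smult_assoc_mat) (use Q X in auto)
    moreover have "Q * X * ((1/2) \<cdot>\<^sub>m Q) = (1/2) \<cdot>\<^sub>m (Q * X * Q)"
      by (rule mult_smult_distrib) (use Q X in auto)
    ultimately have "P c * X * P c = (1/4) \<cdot>\<^sub>m (Q * X * Q)"
      using Q X by (auto simp: P_def Q_def[symmetric] intro!: eq_matI)
    then show ?thesis unfolding Q_def sandwich_expand[OF A X] .
  qed
  then show ?thesis
    using A X by (intro eq_matI) (simp_all add: field_simps del: index_mult_mat(1))
qed

lemma lueders_trace:
  fixes A Y :: "complex mat"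
  assumes A: "A \<in> carrier_mat d d" and Y: "Y \<in> carrier_mat d d"
  defines "P c \<equiv> (1/2) \<cdot>\<^sub>m (1\<^sub>m d + c \<cdot>\<^sub>m A)"
  shows "mtrace (P 1 * Y * P 1) - mtrace (P (-1) * Y * P (-1)) = mtrace (A * Y)"
proof -
  have PYP: "P c * Y * P c \<in> carrier_mat d d" for c
    using A Y by (intro mult_carrier_mat[of _ d d]) (simp_all add: P_def)
  have "mtrace (P 1 * Y * P 1) - mtrace (P (-1) * Y * P (-1)) = mtrace (P 1 * Y * P 1 - P (-1) * Y * P (-1))"
    by (rule mtrace_minus[OF PYP PYP, symmetric])
  also have "\<dots> = mtrace ((1/2) \<cdot>\<^sub>m (A * Y + Y * A))"
    unfolding P_def lueders_odd_part[OF A Y] ..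
  also have "\<dots> = (1/2) * (mtrace (A * Y) + mtrace (Y * A))"
    using A Y by (simp add: mtrace_smult[of _ d] mtrace_add[of _ d])
  also have "\<dots> = mtrace (A * Y)"
    using mtrace_mult_comm[OF Y A] by simp
  finally show ?thesis .
qed


section \<open>Pauli matrices\<close>

lemma pauli_carrier: "pauli k \<in> carrier_mat 2 2"
  unfolding pauli_def mat_of_rows_list_def carrier_mat_def by auto

lemma pauli_n_carrier: "pauli_n n i \<in> carrier_mat (2^n) (2^n)"
proof (induction n arbitrary: i)
  case (Suc n)
  show ?case using kron_carrier[OF pauli_carrier Suc.IH] by simp
qed simp

lemma dim_row_pauli_n [simp]: "dim_row (pauli_n n i) = 2^n"
  and dim_col_pauli_n [simp]: "dim_col (pauli_n n i) = 2^n"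
  using pauli_n_carrier by auto

lemma pauli_completeness:
  assumes "r < 2" "c < 2" "p < 2" "q < 2"
  shows "(\<Sum>k<4. pauli k $$ (r, c) * pauli k $$ (p, q)) = (if p = c \<and> q = r then 2 else 0)"
proof -
  have "r \<in> {0,1}" "c \<in> {0,1}" "p \<in> {0,1}" "q \<in> {0,1}" using assms by auto
  then show ?thesis
    by (auto simp: pauli_def numeral_eq_Suc lessThan_Suc mat_of_rows_list_def)
qed

lemma pauli_n_completeness:
  assumes "r < 2^n" "c < 2^n" "p < 2^n" "q < 2^n"
  shows "(\<Sum>i<4^n. pauli_n n i $$ (r, c) * pauli_n n i $$ (p, q)) = (if p = c \<and> q = r then 2^n else 0)"
  using assms
proof (induction n arbitrary: r c p q)
  case 0
  then show ?case by simp
next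
  case (Suc n)
  define N :: nat where "N = 2^n"
  have N: "N > 0" by (simp add: N_def)
  have div_less: "x div N < 2" and mod_less: "x mod N < 2^n" if "x < 2^Suc n" for x
    using that N by (simp_all add: N_def less_mult_imp_div_less)
  have entry: "kron (pauli k) (pauli_n n l) $$ (x, y) =
      pauli k $$ (x div N, y div N) * pauli_n n l $$ (x mod N, y mod N)"
    if "x < 2^Suc n" "y < 2^Suc n" for k l x y
    using that by (simp add: N_def index_kron[OF pauli_carrier pauli_n_carrier])
  have "(\<Sum>i<4^Suc n. pauli_n (Suc n) i $$ (r, c) * pauli_n (Suc n) i $$ (p, q))
      = (\<Sum>l<4^n. \<Sum>k<4. pauli_n (Suc n) (l * 4 + k) $$ (r, c) * pauli_n (Suc n) (l * 4 + k) $$ (p, q))"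
    by (simp only: power_Suc mult.commute[of 4 "4^n"] sum_lessThan_mult)
  also have "\<dots> = (\<Sum>k<4. pauli k $$ (r div N, c div N) * pauli k $$ (p div N, q div N)) *
      (\<Sum>l<4^n. pauli_n n l $$ (r mod N, c mod N) * pauli_n n l $$ (p mod N, q mod N))"
    using Suc.prems by (simp add: entry sum_product sum.swap[of _ "{..<4}"] mult_ac)
  also have "\<dots> = (if p div N = c div N \<and> q div N = r div N then 2 else 0) *
      (if p mod N = c mod N \<and> q mod N = r mod N then 2^n else 0)"
    using Suc.prems by (simp add: pauli_completeness div_less Suc.IH mod_less)
  also have "\<dots> = (if p = c \<and> q = r then 2^Suc n else 0)"
  proof -
    have split_eq: "x = y \<longleftrightarrow> x div N = y div N \<and> x mod N = y mod N" for x y :: nat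
      by (metis div_mult_mod_eq)
    show ?thesis unfolding split_eq[of p c] split_eq[of q r] by (simp add: N_def)
  qed
  finally show ?case .
qed

lemma pauli_n_contract:
  assumes "r < 2^n" "c < 2^n"
  shows "(\<Sum>i<4^n. pauli_n n i $$ (r, c) * (\<Sum>p<2^n. \<Sum>q<2^n. g p q * pauli_n n i $$ (p, q))) = 2^n * g c r"
proof -
  have "(\<Sum>i<4^n. pauli_n n i $$ (r, c) * (\<Sum>p<2^n. \<Sum>q<2^n. g p q * pauli_n n i $$ (p, q)))
      = (\<Sum>p<2^n. \<Sum>q<2^n. g p q * (\<Sum>i<4^n. pauli_n n i $$ (r, c) * pauli_n n i $$ (p, q)))"
    by (simp add: sum_distrib_left sum.swap[of _ "{..<4^n}"] mult_ac)
  also have "\<dots> = (\<Sum>p<2^n. \<Sum>q<2^n. g p q * (if p = c \<and> q = r then 2^n else 0))"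
    using assms by (intro sum.cong refl) (simp add: pauli_n_completeness)
  also have "\<dots> = (\<Sum>p<2^n. if p = c then 2^n * g c r else 0)"
    using assms by (intro sum.cong refl) (simp add: if_distrib[of "\<lambda>x. _ * x"] mult.commute cong: if_cong)
  also have "\<dots> = 2^n * g c r"
    using assms by simp
  finally show ?thesis .
qed

lemma pauli_n_expansion:
  assumes "B \<in> carrier_mat (2^n) (2^n)" "r < 2^n" "c < 2^n"
  shows "(\<Sum>i<4^n. mtrace (pauli_n n i * B) * pauli_n n i $$ (r, c)) = 2^n * B $$ (r, c)"
  using pauli_n_contract[OF assms(2,3), of "\<lambda>p q. B $$ (q, p)"] assms(1)
  by (simp add: mtrace_mult[OF pauli_n_carrier] mult_ac)

lemma index_anticommutator_eq_sum:
  fixes A M :: "'a::comm_semiring_0 mat"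
  assumes A: "A \<in> carrier_mat d d" and M: "M \<in> carrier_mat d d" and xy: "x < d" "y < d"
  shows "(A * M + M * A) $$ (x, y) = (\<Sum>p<d. \<Sum>q<d.
    ((if p = x then M $$ (q, y) else 0) + (if q = y then M $$ (x, p) else 0)) * A $$ (p, q))"
proof -
  have "(\<Sum>p<d. \<Sum>q<d. (if p = x then M $$ (q, y) else 0) * A $$ (p, q))
      = (\<Sum>q<d. \<Sum>p<d. (if p = x then M $$ (q, y) else 0) * A $$ (p, q))"
    by (rule sum.swap)
  also have "\<dots> = (A * M) $$ (x, y)"
    using A M xy
    by (simp add: scalar_prod_def atLeast0LessThan if_distrib[of "\<lambda>x. _ * x"] if_distrib[of "\<lambda>x. x * _"]
        cong: if_cong) (simp add: mult.commute)
  moreover have "(M * A) $$ (x, y) = (\<Sum>p<d. \<Sum>q<d. (if q = y then M $$ (x, p) else 0) * A $$ (p, q))"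
    using A M xy by (simp add: scalar_prod_def atLeast0LessThan if_distrib[of "\<lambda>x. x * _"] cong: if_cong)
  ultimately show ?thesis
    using A M xy by (simp add: distrib_right sum.distrib)
qed

lemma msum_pauli_n_anticommutator:
  assumes M: "M \<in> carrier_mat (2^n) (2^n)" and rc: "r < 2^n" "c < 2^n"
  shows "msum (2^n) (\<lambda>i. pauli_n n i $$ (r, c) \<cdot>\<^sub>m (pauli_n n i * M + M * pauli_n n i)) {..<4^n}
       = 2^n \<cdot>\<^sub>m (ket_bra (2^n) c r * M + M * ket_bra (2^n) c r)"
proof (rule eq_matI)
  fix x y assume "x < dim_row (2^n \<cdot>\<^sub>m (ket_bra (2^n) c r * M + M * ket_bra (2^n) c r))"
    and "y < dim_col (2^n \<cdot>\<^sub>m (ket_bra (2^n) c r * M + M * ket_bra (2^n) c r))"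
  then have xy: "x < 2^n" "y < 2^n" using M by auto
  have "msum (2^n) (\<lambda>i. pauli_n n i $$ (r, c) \<cdot>\<^sub>m (pauli_n n i * M + M * pauli_n n i)) {..<4^n} $$ (x, y)
      = (\<Sum>i<4^n. pauli_n n i $$ (r, c) * (pauli_n n i * M + M * pauli_n n i) $$ (x, y))"
    using carrier_matD[OF M] xy by (simp add: index_msum)
  also have "\<dots> = 2^n * ((if c = x then M $$ (r, y) else 0) + (if r = y then M $$ (x, c) else 0))"
    by (simp add: index_anticommutator_eq_sum[OF pauli_n_carrier M xy] pauli_n_contract[OF rc])
  also have "\<dots> = (2^n \<cdot>\<^sub>m (ket_bra (2^n) c r * M + M * ket_bra (2^n) c r)) $$ (x, y)"
    using M xy rc by (simp add: index_ket_bra_mult index_mult_ket_bra algebra_simps del: index_mult_mat(1))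
  finally show "msum (2^n) (\<lambda>i. pauli_n n i $$ (r, c) \<cdot>\<^sub>m (pauli_n n i * M + M * pauli_n n i)) {..<4^n} $$ (x, y)
      = (2^n \<cdot>\<^sub>m (ket_bra (2^n) c r * M + M * ket_bra (2^n) c r)) $$ (x, y)" .
qed (use M in auto)


section \<open>The pseudo-density matrix and the Choi matrix\<close>

lemma corr_eq_mtrace:
  assumes lin: "linear_map_on (2^n) \<Phi>" and rho: "\<rho> \<in> carrier_mat (2^n) (2^n)"
  shows "corr n \<rho> \<Phi> i1 i2 =
    mtrace (pauli_n n i2 * \<Phi> ((1/2) \<cdot>\<^sub>m (pauli_n n i1 * \<rho> + \<rho> * pauli_n n i1)))"
proof -
  let ?\<sigma>1 = "pauli_n n i1" and ?\<sigma>2 = "pauli_n n i2"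
  define Y where "Y a = proj n i1 a * \<rho> * proj n i1 a" for a
  have proj: "proj n i a \<in> carrier_mat (2^n) (2^n)" for i a
    by (simp add: proj_def pauli_n_carrier)
  have Y: "Y a \<in> carrier_mat (2^n) (2^n)" for a
    using proj rho unfolding Y_def by (intro mult_carrier_mat[of _ _ "2^n"])
  have \<Phi>Y: "\<Phi> (Y a) \<in> carrier_mat (2^n) (2^n)" for a
    by (rule linear_map_on_carrier[OF lin Y])
  have second_measurement: "mtrace (proj n i2 1 * Z * proj n i2 1) - mtrace (proj n i2 (-1) * Z * proj n i2 (-1))
      = mtrace (?\<sigma>2 * Z)" if "Z \<in> carrier_mat (2^n) (2^n)" for Z
    using lueders_trace[OF pauli_n_carrier that] by (simp add: proj_def)
  have "corr n \<rho> \<Phi> i1 i2 = mtrace (?\<sigma>2 * \<Phi> (Y 1)) - mtrace (?\<sigma>2 * \<Phi> (Y (-1)))"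
    by (simp add: corr_def joint_prob_def Y_def[symmetric] second_measurement[OF \<Phi>Y, symmetric])
  also have "\<dots> = mtrace (?\<sigma>2 * \<Phi> (Y 1 - Y (-1)))"
    using mtrace_minus[OF mult_carrier_mat[OF pauli_n_carrier \<Phi>Y] mult_carrier_mat[OF pauli_n_carrier \<Phi>Y]]
    by (simp add: linear_map_on_minus[OF lin Y Y] mult_minus_distrib_mat[OF pauli_n_carrier \<Phi>Y \<Phi>Y])
  also have "Y 1 - Y (-1) = (1/2) \<cdot>\<^sub>m (?\<sigma>1 * \<rho> + \<rho> * ?\<sigma>1)"
    using lueders_odd_part[OF pauli_n_carrier rho] by (simp add: Y_def proj_def)
  finally show ?thesis .
qed

lemma pdm_carrier: "pdm n \<rho> \<Phi> \<in> carrier_mat (2^n * 2^n) (2^n * 2^n)"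
  by (simp add: pdm_def)

lemma index_pdm_block_corr:
  assumes "i < 2^n" "j < 2^n" "p < 2^n" "q < 2^n"
  shows "pdm n \<rho> \<Phi> $$ (i * 2^n + p, j * 2^n + q) = 1 / 2^(2*n) *
    (\<Sum>i1<4^n. \<Sum>i2<4^n. corr n \<rho> \<Phi> i1 i2 * (pauli_n n i1 $$ (i, j) * pauli_n n i2 $$ (p, q)))"
proof -
  have "pdm n \<rho> \<Phi> $$ (i * 2^n + p, j * 2^n + q) = 1 / 2^(2*n) * (\<Sum>s\<in>{..<4^n} \<times> {..<4^n}.
      corr n \<rho> \<Phi> (fst s) (snd s) * (pauli_n n (fst s) $$ (i, j) * pauli_n n (snd s) $$ (p, q)))"
  proof -
    have "kron (pauli_n n a) (pauli_n n b) $$ (i * 2^n + p, j * 2^n + q)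
        = pauli_n n a $$ (i, j) * pauli_n n b $$ (p, q)" for a b
      using assms by (rule index_kron_block[OF pauli_n_carrier pauli_n_carrier])
    then show ?thesis
      using assms block_index_less[of i "2^n" p "2^n"] block_index_less[of j "2^n" q "2^n"]
      by (simp add: pdm_def index_msum split_def)
  qed
  then show ?thesis by (simp add: sum.cartesian_product split_def)
qed

lemma index_pdm_block:
  assumes lin: "linear_map_on (2^n) \<Phi>" and rho: "\<rho> \<in> carrier_mat (2^n) (2^n)"
    and ij: "i < 2^n" "j < 2^n" and pq: "p < 2^n" "q < 2^n"
  shows "pdm n \<rho> \<Phi> $$ (i * 2^n + p, j * 2^n + q) =
    (1/2) * (\<Phi> (\<rho> * ket_bra (2^n) j i) $$ (p, q) + \<Phi> (ket_bra (2^n) j i * \<rho>) $$ (p, q))"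
proof -
  let ?\<sigma> = "pauli_n n" and ?E = "ket_bra (2^n) j i"
  define S where "S k = ?\<sigma> k * \<rho> + \<rho> * ?\<sigma> k" for k
  have S: "S k \<in> carrier_mat (2^n) (2^n)" for k
    using rho pauli_n_carrier[of n k] by (simp add: S_def)
  have \<Phi>S: "\<Phi> (c \<cdot>\<^sub>m S k) \<in> carrier_mat (2^n) (2^n)" for c k
    using S by (simp add: linear_map_on_carrier[OF lin])
  have "pdm n \<rho> \<Phi> $$ (i * 2^n + p, j * 2^n + q) = 1 / 2^(2*n) * (\<Sum>k<4^n. ?\<sigma> k $$ (i, j) *
      (\<Sum>l<4^n. mtrace (?\<sigma> l * \<Phi> ((1/2) \<cdot>\<^sub>m S k)) * ?\<sigma> l $$ (p, q)))"
    using ij pq by (simp add: index_pdm_block_corr corr_eq_mtrace[OF lin rho] S_def sum_distrib_left mult_ac)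
  also have "\<dots> = 1 / 2^(2*n) * (\<Sum>k<4^n. ?\<sigma> k $$ (i, j) * (2^n * \<Phi> ((1/2) \<cdot>\<^sub>m S k) $$ (p, q)))"
    using pq by (simp add: pauli_n_expansion[OF \<Phi>S])
  also have "\<dots> = 1 / 2^(2*n) * 2^n * (1/2) * (\<Sum>k<4^n. ?\<sigma> k $$ (i, j) * \<Phi> (S k) $$ (p, q))"
  proof -
    have half: "\<Phi> ((1/2) \<cdot>\<^sub>m S k) $$ (p, q) = (1/2) * \<Phi> (S k) $$ (p, q)" for k
      using pq carrier_matD[OF linear_map_on_carrier[OF lin S]] by (simp add: linear_map_on_smult[OF lin S])
    show ?thesis by (simp only: half) (simp add: sum_distrib_left mult_ac)
  qed
  also have "\<dots> = 1 / 2^(2*n) * 2^n * (1/2) *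
      \<Phi> (msum (2^n) (\<lambda>k. ?\<sigma> k $$ (i, j) \<cdot>\<^sub>m S k) {..<4^n}) $$ (p, q)"
    using pq S by (simp add: index_linear_map_on_msum[OF lin])
  also have "\<dots> = 1 / 2^(2*n) * 2^n * (1/2) * \<Phi> (2^n \<cdot>\<^sub>m (?E * \<rho> + \<rho> * ?E)) $$ (p, q)"
    unfolding S_def msum_pauli_n_anticommutator[OF rho ij] ..
  also have "\<dots> = (1/2) * (\<Phi> (\<rho> * ?E) $$ (p, q) + \<Phi> (?E * \<rho>) $$ (p, q))"
  proof -
    let ?X = "?E * \<rho>" and ?Y = "\<rho> * ?E"
    have XY: "?X \<in> carrier_mat (2^n) (2^n)" "?Y \<in> carrier_mat (2^n) (2^n)"
      using rho by auto
    have "\<Phi> (2^n \<cdot>\<^sub>m (?X + ?Y)) $$ (p, q) = 2^n * (\<Phi> ?Y $$ (p, q) + \<Phi> ?X $$ (p, q))"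
      using XY pq carrier_matD[OF linear_map_on_carrier[OF lin XY(1)]]
        carrier_matD[OF linear_map_on_carrier[OF lin XY(2)]]
      by (simp add: linear_map_on_smult[OF lin] linear_map_on_add[OF lin XY] add.commute)
    moreover have "1 / 2^(2*n) * 2^n * (1/2) * 2^n = (1/2 :: complex)"
      by (simp add: mult_2 power_add)
    ultimately show ?thesis
      by (metis (no_types, lifting) mult.assoc)
  qed
  finally show ?thesis .
qed

lemma choi_carrier: "choi d \<Phi> \<in> carrier_mat (d * d) (d * d)"
  by (simp add: choi_def)

lemma index_choi_block:
  assumes lin: "linear_map_on d \<Phi>" and "i < d" "j < d" "p < d" "q < d"
  shows "choi d \<Phi> $$ (i * d + p, j * d + q) = \<Phi> (ket_bra d j i) $$ (p, q)"
proof -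
  have "choi d \<Phi> $$ (i * d + p, j * d + q)
      = (\<Sum>s\<in>{..<d} \<times> {..<d}. ket_bra d (fst s) (snd s) $$ (j, i) * \<Phi> (ket_bra d (fst s) (snd s)) $$ (p, q))"
    using assms block_index_less[of i d p d] block_index_less[of j d q d]
    by (simp add: choi_def index_msum split_def)
      (auto simp: index_kron_block[OF transpose_carrier_mat[THEN iffD2, OF ket_bra_carrier]
          linear_map_on_carrier[OF lin ket_bra_carrier]] intro!: sum.cong)
  also have "\<dots> = (\<Sum>s\<in>{..<d} \<times> {..<d}. if s = (j, i) then \<Phi> (ket_bra d j i) $$ (p, q) else 0)"
    using assms by (intro sum.cong refl) (auto simp: ket_bra_def)
  also have "\<dots> = \<Phi> (ket_bra d j i) $$ (p, q)"
    using assms by simp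
  finally show ?thesis .
qed

lemma index_choi_mult_kron_one_block:
  assumes lin: "linear_map_on d \<Phi>" and rho: "\<rho> \<in> carrier_mat d d"
    and ij: "i < d" "j < d" and pq: "p < d" "q < d"
  shows "(choi d \<Phi> * kron \<rho> (1\<^sub>m d)) $$ (i * d + p, j * d + q) = \<Phi> (\<rho> * ket_bra d j i) $$ (p, q)"
proof -
  have "(choi d \<Phi> * kron \<rho> (1\<^sub>m d)) $$ (i * d + p, j * d + q)
      = (\<Sum>k<d. \<Sum>l<d. choi d \<Phi> $$ (i * d + p, k * d + l) * kron \<rho> (1\<^sub>m d) $$ (k * d + l, j * d + q))"
    using rho block_index_less[OF ij(1) pq(1)] block_index_less[OF ij(2) pq(2)]
    by (simp add: choi_def scalar_prod_def atLeast0LessThan sum_lessThan_mult)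
  also have "\<dots> = (\<Sum>k<d. \<Sum>l<d. \<Phi> (ket_bra d k i) $$ (p, l) * (\<rho> $$ (k, j) * 1\<^sub>m d $$ (l, q)))"
    using assms by (simp add: index_choi_block index_kron_block[OF rho one_carrier_mat])
  also have "\<dots> = (\<Sum>k<d. \<rho> $$ (k, j) * \<Phi> (ket_bra d k i) $$ (p, q))"
    using pq by (simp add: if_distrib[of "\<lambda>x. _ * x"] mult.commute cong: if_cong)
  also have "\<dots> = \<Phi> (msum d (\<lambda>k. \<rho> $$ (k, j) \<cdot>\<^sub>m ket_bra d k i) {..<d}) $$ (p, q)"
    by (rule index_linear_map_on_msum[symmetric]) (use lin pq in auto)
  also have "\<dots> = \<Phi> (\<rho> * ket_bra d j i) $$ (p, q)"
    using rho ij by (simp add: mult_ket_bra_eq_msum)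
  finally show ?thesis .
qed

lemma index_kron_one_mult_choi_block:
  assumes lin: "linear_map_on d \<Phi>" and rho: "\<rho> \<in> carrier_mat d d"
    and ij: "i < d" "j < d" and pq: "p < d" "q < d"
  shows "(kron \<rho> (1\<^sub>m d) * choi d \<Phi>) $$ (i * d + p, j * d + q) = \<Phi> (ket_bra d j i * \<rho>) $$ (p, q)"
proof -
  have "(kron \<rho> (1\<^sub>m d) * choi d \<Phi>) $$ (i * d + p, j * d + q)
      = (\<Sum>k<d. \<Sum>l<d. kron \<rho> (1\<^sub>m d) $$ (i * d + p, k * d + l) * choi d \<Phi> $$ (k * d + l, j * d + q))"
    using rho block_index_less[OF ij(1) pq(1)] block_index_less[OF ij(2) pq(2)]
    by (simp add: choi_def scalar_prod_def atLeast0LessThan sum_lessThan_mult)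
  also have "\<dots> = (\<Sum>k<d. \<Sum>l<d. \<rho> $$ (i, k) * 1\<^sub>m d $$ (p, l) * \<Phi> (ket_bra d j k) $$ (l, q))"
    using assms by (simp add: index_choi_block index_kron_block[OF rho one_carrier_mat])
  also have "\<dots> = (\<Sum>k<d. \<rho> $$ (i, k) * \<Phi> (ket_bra d j k) $$ (p, q))"
    using pq by (simp add: if_distrib[of "\<lambda>x. _ * x"] if_distrib[of "\<lambda>x. x * _"] cong: if_cong)
  also have "\<dots> = \<Phi> (msum d (\<lambda>k. \<rho> $$ (i, k) \<cdot>\<^sub>m ket_bra d j k) {..<d}) $$ (p, q)"
    by (rule index_linear_map_on_msum[symmetric]) (use lin pq in auto)
  also have "\<dots> = \<Phi> (ket_bra d j i * \<rho>) $$ (p, q)"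
    using rho ij by (simp add: ket_bra_mult_eq_msum)
  finally show ?thesis .
qed

theorem theorem1:
  fixes n :: nat and \<rho>1 :: "complex mat" and \<Phi> :: "complex mat \<Rightarrow> complex mat"
  assumes "n \<ge> 1"
    and "density_matrix (2^n) \<rho>1"
    and "CPTP (2^n) \<Phi>"
  shows "pdm n \<rho>1 \<Phi> =
     (1/2 :: complex) \<cdot>\<^sub>m (choi (2^n) \<Phi> * kron \<rho>1 (1\<^sub>m (2^n)) + kron \<rho>1 (1\<^sub>m (2^n)) * choi (2^n) \<Phi>)"
proof -
  have rho: "\<rho>1 \<in> carrier_mat (2^n) (2^n)"
    using assms(2) by (simp add: density_matrix_def psd_def)
  have lin: "linear_map_on (2^n) \<Phi>"
    using assms(3) by (simp add: CPTP_def)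
  have K: "kron \<rho>1 (1\<^sub>m (2^n)) \<in> carrier_mat (2^n * 2^n) (2^n * 2^n)"
    using kron_carrier[OF rho one_carrier_mat] .
  show ?thesis
    using mult_carrier_mat[OF K choi_carrier] carrier_matD[OF rho] carrier_matD[OF choi_carrier]
    by (intro mat_eq_blockI[where d = "2^n"])
      (simp_all add: pdm_carrier block_index_less index_pdm_block[OF lin rho]
        index_choi_mult_kron_one_block[OF lin rho] index_kron_one_mult_choi_block[OF lin rho]
        del: index_mult_mat(1))
qed

end
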